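(* Let $X$ be a topological space, $(Z,d)$ a bounded metric space, and $F:X\to 2^Z$ a lower quasicontinuous set-valued mapping. Then $$A=\{x\in X:\ \forall\varepsilon>0\ \exists U\in\mathcal V_X(x),\ \mathrm{diam}(F(U))\le 2\,\mathrm{diam}(F(x))+\varepsilon\}$$ is a residual subset of $X$.
   Context: $2^Z$ is the set of nonempty subsets of $Z$; $\mathcal V_X(x)$ is the set of neighborhoods of $x$ in $X$; $F(U)=\bigcup_{x\in U}F(x)$; $\mathrm{diam}(W)=\sup\{d(u,v):u,v\in W\}$. $F$ is lower quasicontinuous if for each $x_0\in X$, each neighborhood $U$ of $x_0$ and each open $W\subset Z$ with $F(x_0)\cap W\neq\emptyset$, there is an open $O$ with $\emptyset\ne O\subset U$ and $F(x)\cap W\ne\emptyset$ for all $x\in O$. Residual means containing a countable intersection of dense open sets. *)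

theory Defs
  imports "HOL-Analysis.Analysis"
begin

definition is_nhd :: "'a::topological_space set \<Rightarrow> 'a \<Rightarrow> bool" where
  "is_nhd U x \<longleftrightarrow> (\<exists>V. open V \<and> x \<in> V \<and> V \<subseteq> U)"

definition lower_quasicontinuous :: "('a::topological_space \<Rightarrow> 'b::topological_space set) \<Rightarrow> bool" where
  "lower_quasicontinuous F \<longleftrightarrow>
     (\<forall>x0 U W. is_nhd U x0 \<and> open W \<and> F x0 \<inter> W \<noteq> {} \<longrightarrow>
        (\<exists>V. open V \<and> V \<noteq> {} \<and> V \<subseteq> U \<and> (\<forall>x\<in>V. F x \<inter> W \<noteq> {})))"

definition residual :: "'a::topological_space set \<Rightarrow> bool" where
  "residual S \<longleftrightarrow> (\<exists>G::nat \<Rightarrow> 'a set. (\<forall>n. open (G n) \<and> closure (G n) = UNIV) \<and> \<Inter>(range G) \<subseteq> S)"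

end

theory Submission
  imports Defs
begin

(* For \<epsilon> > 0 let S \<epsilon> be the set of points x having a neighbourhood U
   with diam F(U) \<le> 2 diam F(x) + \<epsilon>.  The target set contains the intersection of
   the sets S (1/(n+1)), so it is residual as soon as every S \<epsilon> has dense interior,
   i.e. as soon as every nonempty open V contains a nonempty open Q with
   diam F(Q) \<le> 2 diam F(y) + \<epsilon> for all y \<in> Q.
   To find Q: first shrink V to an open Q1 whose image diameter is almost minimal
   among its open subsets.  Pick z in some F(x0), x0 \<in> Q1, and use lower
   quasicontinuity to shrink to Q2 where every F(x) comes close to z.  Since
   diam F(Q2) is almost diam F(Q1), some c \<in> F(y), y \<in> Q2, lies at distance about
   diam F(Q1)/2 from z; shrinking once more to Q3 where every F(x) also comes close
   to c, each F(y') with y' \<in> Q3 contains points near z and near c, hence has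
   diameter at least about diam F(Q1)/2 \<ge> diam F(Q3)/2.
   The file first proves the topological and metric ingredients, then the
   shrinking step (key_open_subset), and finally the theorem. *)

lemma dense_interior_if_open_witnesses:
  fixes S :: "'a::topological_space set"
  assumes "\<And>V. open V \<Longrightarrow> V \<noteq> {} \<Longrightarrow> \<exists>Q. open Q \<and> Q \<noteq> {} \<and> Q \<subseteq> V \<and> Q \<subseteq> S"
  shows "closure (interior S) = UNIV"
proof (rule ccontr)
  assume "closure (interior S) \<noteq> UNIV"
  then have "open (- closure (interior S))" "- closure (interior S) \<noteq> {}" by auto
  then obtain Q where Q: "open Q" "Q \<noteq> {}" "Q \<subseteq> - closure (interior S)" "Q \<subseteq> S"
    using assms by blast
  then have "Q \<subseteq> interior S" by (simp add: interior_maximal)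
  with Q closure_subset show False by blast
qed

lemma residual_if_dense_interiors:
  fixes S :: "nat \<Rightarrow> 'a::topological_space set"
  assumes "\<And>n. closure (interior (S n)) = UNIV" and "\<Inter>(range S) \<subseteq> T"
  shows "residual T"
  unfolding residual_def
proof (intro exI[of _ "\<lambda>n. interior (S n)"] conjI allI)
  show "\<Inter>(range (\<lambda>n. interior (S n))) \<subseteq> T"
    using assms(2) interior_subset by blast
qed (use assms(1) in auto)

text \<open>For a set function bounded below on nonempty open sets, every nonempty open
  set V contains a nonempty open Q1 whose value is within \<delta> of the value of
  every nonempty open subset of Q1 (take Q1 almost attaining the infimum over V).\<close>
lemma near_minimal_open_subset:
  fixes D :: "'a::topological_space set \<Rightarrow> real"
  assumes D_bdd: "\<And>Q. D Q \<ge> b" and V: "open V" "V \<noteq> {}" and "\<delta> > 0"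
  obtains Q1 where "open Q1" "Q1 \<noteq> {}" "Q1 \<subseteq> V"
    "\<And>Q. open Q \<Longrightarrow> Q \<noteq> {} \<Longrightarrow> Q \<subseteq> Q1 \<Longrightarrow> D Q1 < D Q + \<delta>"
proof -
  define M where "M = {D Q | Q. open Q \<and> Q \<noteq> {} \<and> Q \<subseteq> V}"
  have M_ne: "M \<noteq> {}" using V by (auto simp: M_def)
  have M_bdd: "bdd_below M" using D_bdd by (auto simp: M_def bdd_below_def)
  have "Inf M < Inf M + \<delta>" using \<open>\<delta> > 0\<close> by simp
  then obtain d where "d \<in> M" "d < Inf M + \<delta>" using cInf_lessD[OF M_ne] by blast
  then obtain Q1 where Q1: "open Q1" "Q1 \<noteq> {}" "Q1 \<subseteq> V" "D Q1 < Inf M + \<delta>"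
    unfolding M_def by blast
  have "D Q1 < D Q + \<delta>" if "open Q" "Q \<noteq> {}" "Q \<subseteq> Q1" for Q
  proof -
    have "Q \<subseteq> V" using that(3) Q1(3) by blast
    then have "D Q \<in> M" using that(1,2) unfolding M_def by blast
    then have "Inf M \<le> D Q" by (rule cInf_lower[OF _ M_bdd])
    with Q1(4) show ?thesis by linarith
  qed
  with Q1 that show ?thesis by blast
qed

lemma far_point_in_set:
  fixes S :: "'b::metric_space set"
  assumes "bounded S" "S \<noteq> {}" "\<delta> > 0"
  obtains c where "c \<in> S" "diameter S - \<delta> \<le> 2 * dist c z"
proof (cases "diameter S - \<delta> > 0")
  case True
  then obtain a b where ab: "a \<in> S" "b \<in> S" "diameter S - \<delta> < dist a b"
    using diameter_lower_bounded[OF assms(1) True] assms(3) by auto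
  have "dist a b \<le> dist a z + dist b z" by (simp add: dist_triangle2)
  then consider "diameter S - \<delta> \<le> 2 * dist a z" | "diameter S - \<delta> \<le> 2 * dist b z"
    using ab(3) by linarith
  then show ?thesis using ab that by metis
next
  case False
  obtain c where "c \<in> S" using assms(2) by blast
  moreover have "diameter S - \<delta> \<le> 2 * dist c z" using False zero_le_dist[of c z] by linarith
  ultimately show ?thesis by (rule that)
qed

lemma dist_le_diameter_plus:
  fixes S :: "'b::metric_space set"
  assumes "bounded S" "p \<in> S" "dist z p < \<eta>" "q \<in> S" "dist c q < \<eta>"
  shows "dist c z \<le> diameter S + 2 * \<eta>"
proof -
  have "dist c z \<le> dist c q + dist q p + dist z p"
    using dist_triangle[of c z q] dist_triangle[of q z p] dist_commute[of p z] by linarith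
  moreover have "dist q p \<le> diameter S" using diameter_bounded_bound assms(1,2,4) by blast
  ultimately show ?thesis using assms(3,5) by linarith
qed

lemma lqc_open_subset_near:
  assumes "lower_quasicontinuous F" "open Q" "y \<in> Q" "w \<in> F y" "r > 0"
  obtains Q' where "open Q'" "Q' \<noteq> {}" "Q' \<subseteq> Q" "\<And>x. x \<in> Q' \<Longrightarrow> F x \<inter> ball w r \<noteq> {}"
proof -
  have "is_nhd Q y" using assms(2,3) by (auto simp: is_nhd_def)
  moreover have "F y \<inter> ball w r \<noteq> {}" using assms(4,5) by auto
  ultimately show ?thesis
    using assms(1) that unfolding lower_quasicontinuous_def by (meson open_ball)
qed

lemma key_open_subset:
  fixes F :: "'a::topological_space \<Rightarrow> 'b::metric_space set"
  assumes bnd: "bounded (UNIV :: 'b set)" and ne: "\<And>x. F x \<noteq> {}"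
    and lqc: "lower_quasicontinuous F"
    and "\<epsilon> > 0" and V: "open V" "V \<noteq> {}"
  obtains Q where "open Q" "Q \<noteq> {}" "Q \<subseteq> V"
    "\<And>y. y \<in> Q \<Longrightarrow> diameter (\<Union>(F ` Q)) \<le> 2 * diameter (F y) + \<epsilon>"
proof -
  have bd: "bounded (S :: 'b set)" for S using bnd bounded_subset by blast
  define D where "D Q = diameter (\<Union>(F ` Q))" for Q
  define \<delta> where "\<delta> = \<epsilon> / 4"
  define \<eta> where "\<eta> = \<epsilon> / 8"
  have pos: "\<delta> > 0" "\<eta> > 0" using \<open>\<epsilon> > 0\<close> by (auto simp: \<delta>_def \<eta>_def)
  have D_nonneg: "0 \<le> D Q" for Q unfolding D_def by (rule diameter_ge_0[OF bd])
  obtain Q1 where Q1: "open Q1" "Q1 \<noteq> {}" "Q1 \<subseteq> V"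
    and almost_min: "\<And>Q. open Q \<Longrightarrow> Q \<noteq> {} \<Longrightarrow> Q \<subseteq> Q1 \<Longrightarrow> D Q1 < D Q + \<delta>"
    using near_minimal_open_subset[of 0 D, OF D_nonneg V pos(1)] by blast
  obtain x0 z where x0: "x0 \<in> Q1" "z \<in> F x0" using Q1(2) ne by blast
  obtain Q2 where Q2: "open Q2" "Q2 \<noteq> {}" "Q2 \<subseteq> Q1"
    and near_z: "\<And>x. x \<in> Q2 \<Longrightarrow> F x \<inter> ball z \<eta> \<noteq> {}"
    using lqc_open_subset_near[OF lqc Q1(1) x0 pos(2)] by blast
  have "\<Union>(F ` Q2) \<noteq> {}" using Q2(2) ne by blast
  then obtain c where "c \<in> \<Union>(F ` Q2)" and far: "D Q2 - \<delta> \<le> 2 * dist c z"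
    unfolding D_def by (rule far_point_in_set[OF bd _ pos(1)])
  then obtain y where y: "y \<in> Q2" "c \<in> F y" by blast
  obtain Q3 where Q3: "open Q3" "Q3 \<noteq> {}" "Q3 \<subseteq> Q2"
    and near_c: "\<And>x. x \<in> Q3 \<Longrightarrow> F x \<inter> ball c \<eta> \<noteq> {}"
    using lqc_open_subset_near[OF lqc Q2(1) y pos(2)] by blast
  have "D Q3 \<le> D Q1"
    unfolding D_def using Q3(3) Q2(3) by (intro diameter_subset) (auto intro: bd)
  moreover have "D Q1 < D Q2 + \<delta>" using almost_min Q2 by blast
  ultimately have Q3_bound: "D Q3 < 2 * dist c z + 2 * \<delta>" using far by linarith
  have "D Q3 \<le> 2 * diameter (F y') + \<epsilon>" if "y' \<in> Q3" for y'
  proof -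
    have "y' \<in> Q2" using that Q3(3) by blast
    then obtain p where "p \<in> F y'" "dist z p < \<eta>" using near_z[of y'] by (auto simp: mem_ball)
    moreover obtain q where "q \<in> F y'" "dist c q < \<eta>" using near_c[of y'] \<open>y' \<in> Q3\<close> by (auto simp: mem_ball)
    ultimately have "dist c z \<le> diameter (F y') + 2 * \<eta>"
      by (rule dist_le_diameter_plus[OF bd])
    moreover have "4 * \<eta> + 2 * \<delta> = \<epsilon>" by (simp add: \<delta>_def \<eta>_def)
    ultimately show ?thesis using Q3_bound by linarith
  qed
  moreover have "Q3 \<subseteq> V" using Q1(3) Q2(3) Q3(3) by blast
  ultimately show ?thesis using that[OF Q3(1,2)] unfolding D_def by blast
qed

theorem lemma3p2:
  fixes F :: "'a::topological_space \<Rightarrow> 'b::metric_space set"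
  assumes "bounded (UNIV :: 'b set)"
    and "\<And>x. F x \<noteq> {}"
    and "lower_quasicontinuous F"
  shows "residual {x. \<forall>\<epsilon>>0. \<exists>U. is_nhd U x \<and>
            diameter (\<Union>(F ` U)) \<le> 2 * diameter (F x) + \<epsilon>}"
proof -
  define S where "S \<epsilon> = {x. \<exists>U. is_nhd U x \<and> diameter (\<Union>(F ` U)) \<le> 2 * diameter (F x) + \<epsilon>}"
    for \<epsilon> :: real
  have "closure (interior (S (1 / Suc n))) = UNIV" for n
  proof (rule dense_interior_if_open_witnesses)
    fix V :: "'a set" assume "open V" "V \<noteq> {}"
    then obtain Q where Q: "open Q" "Q \<noteq> {}" "Q \<subseteq> V"
      "\<And>y. y \<in> Q \<Longrightarrow> diameter (\<Union>(F ` Q)) \<le> 2 * diameter (F y) + 1 / Suc n"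
      using key_open_subset[OF assms, of "1 / Suc n" V] by auto
    then have "Q \<subseteq> S (1 / Suc n)" by (auto simp: S_def is_nhd_def)
    with Q show "\<exists>Q. open Q \<and> Q \<noteq> {} \<and> Q \<subseteq> V \<and> Q \<subseteq> S (1 / Suc n)" by blast
  qed
  moreover have "\<Inter>(range (\<lambda>n. S (1 / Suc n))) \<subseteq> {x. \<forall>\<epsilon>>0. \<exists>U. is_nhd U x \<and>
            diameter (\<Union>(F ` U)) \<le> 2 * diameter (F x) + \<epsilon>}"
  proof (intro subsetI CollectI allI impI)
    fix x and \<epsilon> :: real assume x: "x \<in> \<Inter>(range (\<lambda>n. S (1 / Suc n)))" and "\<epsilon> > 0"
    then obtain n where "1 / Suc n < \<epsilon>" using nat_approx_posE by blast
    moreover have "x \<in> S (1 / Suc n)" using x by blast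
    ultimately show "\<exists>U. is_nhd U x \<and> diameter (\<Union>(F ` U)) \<le> 2 * diameter (F x) + \<epsilon>"
      unfolding S_def by fastforce
  qed
  ultimately show ?thesis by (rule residual_if_dense_interiors)
qed

end
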